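(* Let ${\tt G}$ be a connected digraph with exactly $n>2$ edges. If the path poset $P({\tt G})$ is isomorphic to $\mathbb B(n)$ with its maximum removed, then ${\tt G}\cong{\tt P}_{n-1}$.
   Context: A digraph ${\tt G}=(V,E)$ has finite $V$ and $E\subseteq (V\times V)\setminus\{(v,v)\}$; connected means the underlying undirected graph is connected. A multipath of ${\tt G}$ is a spanning subgraph (all vertices, subset of edges) each of whose components is an isolated vertex or a simple directed path (edges $e_1,\dots,e_k$ with target of $e_i$ equal to source of $e_{i+1}$, no repeated vertex, not a cycle); $P({\tt G})$ is the set of multipaths ordered by inclusion of edge sets. $\mathbb B(n)$ is the power set of $\{0,\dots,n-1\}$ ordered by inclusion. ${\tt P}_m$ is the coherently oriented polygon with vertices $v_0,\dots,v_m$ and edges $(v_i,v_{i+1})$, $0\le i<m$, and $(v_m,v_0)$ (so it has $m+1$ edges). *)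

theory Defs
  imports Main
begin

definition digraph :: "'a set \<Rightarrow> ('a \<times> 'a) set \<Rightarrow> bool" where
  "digraph V E \<longleftrightarrow> finite V \<and> E \<subseteq> V \<times> V \<and> (\<forall>v. (v, v) \<notin> E)"

definition dg_connected :: "'a set \<Rightarrow> ('a \<times> 'a) set \<Rightarrow> bool" where
  "dg_connected V E \<longleftrightarrow> (\<forall>u\<in>V. \<forall>v\<in>V. (u, v) \<in> (E \<union> E\<inverse>)\<^sup>*)"

definition comp_of :: "('a \<times> 'a) set \<Rightarrow> 'a \<Rightarrow> 'a set" where
  "comp_of F v = {u. (v, u) \<in> (F \<union> F\<inverse>)\<^sup>*}"

definition is_simple_dpath :: "('a \<times> 'a) set \<Rightarrow> 'a set \<Rightarrow> bool" where
  "is_simple_dpath F C \<longleftrightarrow> (\<exists>vs. distinct vs \<and> length vs \<ge> 2 \<and> set vs = C \<and>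
      {e \<in> F. fst e \<in> C} = set (zip vs (tl vs)))"

definition multipath :: "'a set \<Rightarrow> ('a \<times> 'a) set \<Rightarrow> ('a \<times> 'a) set \<Rightarrow> bool" where
  "multipath V E F \<longleftrightarrow> F \<subseteq> E \<and>
     (\<forall>v\<in>V. comp_of F v = {v} \<or> is_simple_dpath F (comp_of F v))"

definition path_poset :: "'a set \<Rightarrow> ('a \<times> 'a) set \<Rightarrow> ('a \<times> 'a) set set" where
  "path_poset V E = {F. multipath V E F}"

definition inclusion_iso :: "'a set set \<Rightarrow> 'b set set \<Rightarrow> bool" where
  "inclusion_iso P Q \<longleftrightarrow> (\<exists>f. bij_betw f P Q \<and> (\<forall>A\<in>P. \<forall>B\<in>P. A \<subseteq> B \<longleftrightarrow> f A \<subseteq> f B))"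

definition boolean_minus_top :: "nat \<Rightarrow> nat set set" where
  "boolean_minus_top n = Pow {0..<n} - {{0..<n}}"

definition polygon_V :: "nat \<Rightarrow> nat set" where
  "polygon_V m = {0..m}"
definition polygon_E :: "nat \<Rightarrow> (nat \<times> nat) set" where
  "polygon_E m = {(i, Suc i) | i. i < m} \<union> {(m, 0)}"

definition dg_iso :: "'a set \<Rightarrow> ('a \<times> 'a) set \<Rightarrow> 'b set \<Rightarrow> ('b \<times> 'b) set \<Rightarrow> bool" where
  "dg_iso V E W D \<longleftrightarrow> (\<exists>h. bij_betw h V W \<and>
     (\<forall>u\<in>V. \<forall>v\<in>V. (u, v) \<in> E \<longleftrightarrow> (h u, h v) \<in> D))"

end

theory Submission
  imports Defs
begin

(* An isomorphism with B(n) minus its top element forces P(G) to consist of all proper subsets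
   of E: that poset has no greatest element when n >= 2, whereas E would be the greatest element
   of P(G) if it were a multipath, and both posets have 2^n - 1 elements. As n > 2, any two edges
   then form a multipath, so no two edges share a tail or a head. A longest directed path in
   such a connected digraph visits every vertex and carries every edge except possibly one
   closing edge from its last vertex back to its first. Without that edge E itself would be a
   multipath, so G is a directed cycle through its n vertices. *)

lemma in_set_zip_tl:
  "(x, y) \<in> set (zip vs (tl vs)) \<longleftrightarrow> (\<exists>i. Suc i < length vs \<and> x = vs ! i \<and> y = vs ! Suc i)"
proof -
  have "(x, y) \<in> set (zip vs (tl vs)) \<longleftrightarrow> (\<exists>i. i < length (tl vs) \<and> x = vs ! i \<and> y = tl vs ! i)"
    by (fastforce simp: in_set_zip)
  also have "\<dots> \<longleftrightarrow> (\<exists>i. Suc i < length vs \<and> x = vs ! i \<and> y = vs ! Suc i)"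
    by (rule ex_cong1) (auto simp: nth_tl)
  finally show ?thesis .
qed

lemma single_valued_set_zip:
  assumes "distinct xs"
  shows "single_valued (set (zip xs ys))"
proof (rule single_valuedI)
  have "distinct (map fst (zip xs ys))"
    using assms by (simp add: map_fst_zip_take)
  then show "y = z" if "(x, y) \<in> set (zip xs ys)" "(x, z) \<in> set (zip xs ys)" for x y z
    using that by (rule eq_key_imp_eq_value)
qed

lemma converse_set_zip: "(set (zip xs ys))\<inverse> = set (zip ys xs)"
  by (auto simp: set_zip)

subsection \<open>Multipaths\<close>

lemma multipath_edge_on_path:
  assumes "multipath V E F" "digraph V E" "(x, y) \<in> F"
  obtains vs where "distinct vs" "{e \<in> F. fst e \<in> comp_of F x} = set (zip vs (tl vs))"
proof -
  have "x \<in> V" "y \<in> comp_of F x" "y \<noteq> x"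
    using assms by (auto simp: multipath_def digraph_def comp_of_def)
  then have "is_simple_dpath F (comp_of F x)"
    using assms(1) by (auto simp: multipath_def)
  then show ?thesis
    using that by (auto simp: is_simple_dpath_def)
qed

lemma multipath_single_valued:
  assumes "multipath V E F" "digraph V E"
  shows "single_valued F"
proof (rule single_valuedI)
  fix x y z assume xy: "(x, y) \<in> F" and xz: "(x, z) \<in> F"
  obtain vs where "distinct vs" and path: "{e \<in> F. fst e \<in> comp_of F x} = set (zip vs (tl vs))"
    using multipath_edge_on_path[OF assms xy] .
  have "x \<in> comp_of F x"
    by (simp add: comp_of_def)
  then have "(x, y) \<in> {e \<in> F. fst e \<in> comp_of F x}" "(x, z) \<in> {e \<in> F. fst e \<in> comp_of F x}"
    using xy xz by simp_all
  then have "(x, y) \<in> set (zip vs (tl vs))" "(x, z) \<in> set (zip vs (tl vs))"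
    unfolding path .
  with single_valued_set_zip[OF \<open>distinct vs\<close>] show "y = z"
    by (rule single_valuedD)
qed

lemma multipath_single_valued_converse:
  assumes "multipath V E F" "digraph V E"
  shows "single_valued (F\<inverse>)"
proof (rule single_valuedI)
  fix w u u' assume "(w, u) \<in> F\<inverse>" "(w, u') \<in> F\<inverse>"
  then have uw: "(u, w) \<in> F" and u'w: "(u', w) \<in> F"
    by simp_all
  obtain vs where "distinct vs" and path: "{e \<in> F. fst e \<in> comp_of F u} = set (zip vs (tl vs))"
    using multipath_edge_on_path[OF assms uw] .
  have "(u, w) \<in> (F \<union> F\<inverse>)\<^sup>*" "(w, u') \<in> (F \<union> F\<inverse>)\<^sup>*"
    using uw u'w by blast+
  then have "u \<in> comp_of F u" "u' \<in> comp_of F u"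
    by (auto simp: comp_of_def)
  then have "(u, w) \<in> {e \<in> F. fst e \<in> comp_of F u}" "(u', w) \<in> {e \<in> F. fst e \<in> comp_of F u}"
    using uw u'w by simp_all
  then have "(w, u) \<in> (set (zip vs (tl vs)))\<inverse>" "(w, u') \<in> (set (zip vs (tl vs)))\<inverse>"
    unfolding path by simp_all
  then have "(w, u) \<in> set (zip (tl vs) vs)" "(w, u') \<in> set (zip (tl vs) vs)"
    unfolding converse_set_zip .
  moreover have "single_valued (set (zip (tl vs) vs))"
    using \<open>distinct vs\<close> by (simp add: single_valued_set_zip distinct_tl)
  ultimately show "u = u'"
    by (meson single_valuedD)
qed

lemma single_valued_if_pairs_multipath:
  assumes "digraph V E" "\<And>e e'. e \<in> E \<Longrightarrow> e' \<in> E \<Longrightarrow> multipath V E {e, e'}"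
  shows "single_valued E" "single_valued (E\<inverse>)"
proof -
  show "single_valued E"
  proof (rule single_valuedI)
    fix x y z assume "(x, y) \<in> E" "(x, z) \<in> E"
    then have "single_valued {(x, y), (x, z)}"
      using assms by (blast intro: multipath_single_valued)
    then show "y = z"
      by (auto dest: single_valuedD)
  qed
  show "single_valued (E\<inverse>)"
  proof (rule single_valuedI)
    fix x y z assume "(x, y) \<in> E\<inverse>" "(x, z) \<in> E\<inverse>"
    then have "single_valued ({(y, x), (z, x)}\<inverse>)"
      using assms by (blast intro: multipath_single_valued_converse)
    then show "y = z"
      by (auto dest: single_valuedD)
  qed
qed

lemma comp_of_connected:
  assumes "dg_connected V E" "E \<subseteq> V \<times> V" "v \<in> V"
  shows "comp_of E v = V"
proof
  have "(E \<union> E\<inverse>) `` V \<subseteq> V"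
    using assms(2) by auto
  then have "(E \<union> E\<inverse>)\<^sup>* `` V = V"
    by (rule Image_closed_trancl)
  then show "comp_of E v \<subseteq> V"
    using assms(3) by (auto simp: comp_of_def)
  show "V \<subseteq> comp_of E v"
    using assms(1,3) by (auto simp: dg_connected_def comp_of_def)
qed

lemma spanning_path_multipath:
  assumes "digraph V E" "dg_connected V E" "distinct vs" "length vs \<ge> 2" "set vs = V"
    and "E = set (zip vs (tl vs))"
  shows "multipath V E E"
proof -
  have "{e \<in> E. fst e \<in> V} = E"
    using assms(1) by (auto simp: digraph_def)
  then have "is_simple_dpath E V"
    using assms(3-6) unfolding is_simple_dpath_def by metis
  then show ?thesis
    using comp_of_connected[OF assms(2)] assms(1) by (simp add: multipath_def digraph_def)
qed

subsection \<open>The path poset\<close>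

lemma boolean_minus_top_no_greatest:
  assumes "n \<ge> 2" "X \<in> boolean_minus_top n"
  obtains Y where "Y \<in> boolean_minus_top n" "\<not> Y \<subseteq> X"
proof -
  have "X \<subset> {0..<n}"
    using assms(2) by (auto simp: boolean_minus_top_def)
  then obtain i where "i < n" "i \<notin> X"
    by (metis psubset_imp_ex_mem atLeastLessThan_iff DiffE)
  moreover have "{i} \<noteq> {0..<n}"
  proof
    assume "{i} = {0..<n}"
    then have "card {i} = card {0..<n}"
      by (rule arg_cong)
    with assms(1) show False
      by simp
  qed
  ultimately show ?thesis
    using that[of "{i}"] by (auto simp: boolean_minus_top_def)
qed

lemma inclusion_iso_boolean_minus_top_eq:
  assumes "finite E" "card E = n" "n \<ge> 2" "P \<subseteq> Pow E"
    and "inclusion_iso P (boolean_minus_top n)"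
  shows "P = Pow E - {E}"
proof -
  obtain f where f: "bij_betw f P (boolean_minus_top n)"
    and mono: "\<forall>A\<in>P. \<forall>B\<in>P. A \<subseteq> B \<longleftrightarrow> f A \<subseteq> f B"
    using assms(5) by (auto simp: inclusion_iso_def)
  have "E \<notin> P"
  proof
    assume "E \<in> P"
    then obtain Y where Y: "Y \<in> boolean_minus_top n" "\<not> Y \<subseteq> f E"
      using boolean_minus_top_no_greatest[OF assms(3)] bij_betwE[OF f] by metis
    then obtain A where "A \<in> P" "Y = f A"
      using bij_betw_imp_surj_on[OF f] by blast
    then show False
      using mono \<open>E \<in> P\<close> Y(2) assms(4) by blast
  qed
  then have "P \<subseteq> Pow E - {E}"
    using assms(4) by blast
  moreover have "card P = card (Pow E - {E})"
    using bij_betw_same_card[OF f] assms(1,2)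
    by (simp add: boolean_minus_top_def card_Pow card_Diff_singleton)
  ultimately show ?thesis
    using assms(1) by (simp add: card_subset_eq)
qed

lemma multipath_iff_proper_subset:
  assumes "digraph V E" "card E = n" "n \<ge> 2"
    and "inclusion_iso (path_poset V E) (boolean_minus_top n)"
  shows "multipath V E F \<longleftrightarrow> F \<subset> E"
proof -
  have "finite E"
    using assms(1) by (auto simp: digraph_def intro: finite_subset)
  then have "path_poset V E = Pow E - {E}"
    using assms(2-4)
    by (intro inclusion_iso_boolean_minus_top_eq) (auto simp: path_poset_def multipath_def)
  then have "F \<in> path_poset V E \<longleftrightarrow> F \<in> Pow E - {E}"
    by simp
  then show ?thesis
    by (auto simp: path_poset_def)
qed

subsection \<open>Longest directed paths\<close>

definition dpath :: "('a \<times> 'a) set \<Rightarrow> 'a list \<Rightarrow> bool" where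
  "dpath E vs \<longleftrightarrow> distinct vs \<and> successively (\<lambda>x y. (x, y) \<in> E) vs"

definition longest_dpath :: "'a set \<Rightarrow> ('a \<times> 'a) set \<Rightarrow> 'a list \<Rightarrow> bool" where
  "longest_dpath V E vs \<longleftrightarrow> set vs \<subseteq> V \<and> dpath E vs \<and>
     (\<forall>ws. set ws \<subseteq> V \<and> dpath E ws \<longrightarrow> length ws \<le> length vs)"

lemma dpath_step:
  assumes "dpath E vs" "Suc i < length vs"
  shows "(vs ! i, vs ! Suc i) \<in> E"
  using assms by (simp add: dpath_def successively_conv_nth)

lemma dpath_zip_tl_subset:
  assumes "dpath E vs"
  shows "set (zip vs (tl vs)) \<subseteq> E"
  using assms by (auto simp: in_set_zip_tl dpath_step)

lemma longest_dpath_exists: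
  assumes "finite V"
  obtains vs where "longest_dpath V E vs"
proof -
  let ?P = "\<lambda>ws. set ws \<subseteq> V \<and> dpath E ws"
  have "\<forall>ws. ?P ws \<longrightarrow> length ws < Suc (card V)"
    using assms by (auto simp: dpath_def less_Suc_eq_le simp flip: distinct_card intro: card_mono)
  then obtain vs where "?P vs" "\<forall>ws. ?P ws \<longrightarrow> length ws \<le> length vs"
    using ex_has_greatest_nat[of ?P "[]" length "Suc (card V)"] by (auto simp: dpath_def)
  then show ?thesis
    using that by (auto simp: longest_dpath_def)
qed

lemma longest_dpath_nonempty:
  assumes "longest_dpath V E vs" "v \<in> V"
  shows "vs \<noteq> []"
proof -
  have "set [v] \<subseteq> V \<and> dpath E [v]"
    using assms(2) by (simp add: dpath_def)
  then have "length [v] \<le> length vs"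
    using assms(1) unfolding longest_dpath_def by blast
  then show ?thesis
    by auto
qed

lemma longest_dpath_rev:
  "longest_dpath V (E\<inverse>) (rev vs) \<longleftrightarrow> longest_dpath V E vs"
proof -
  have "dpath (E\<inverse>) ws \<longleftrightarrow> dpath E (rev ws)" for ws
    by (simp add: dpath_def)
  then show ?thesis
    unfolding longest_dpath_def by (metis length_rev rev_rev_ident set_rev)
qed

lemma longest_dpath_pred_hd:
  assumes "longest_dpath V E vs" "E \<subseteq> V \<times> V" "single_valued E" "vs \<noteq> []"
    and "(y, hd vs) \<in> E"
  shows "y = last vs"
proof -
  have "y \<in> set vs"
  proof (rule ccontr)
    assume "y \<notin> set vs"
    then have "dpath E (y # vs)" "set (y # vs) \<subseteq> V"
      using assms by (auto simp: longest_dpath_def dpath_def successively_Cons)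
    then show False
      using assms(1) unfolding longest_dpath_def by (metis Suc_n_not_le_n length_Cons)
  qed
  then obtain j where j: "j < length vs" "y = vs ! j"
    by (auto simp: in_set_conv_nth)
  have "\<not> Suc j < length vs"
  proof
    assume "Suc j < length vs"
    then have "(vs ! j, vs ! Suc j) \<in> E"
      using assms(1) by (auto simp: longest_dpath_def intro: dpath_step)
    then have "vs ! Suc j = vs ! 0"
      using assms(3-5) j by (auto simp: hd_conv_nth dest: single_valuedD)
    moreover have "distinct vs"
      using assms(1) by (simp add: longest_dpath_def dpath_def)
    ultimately show False
      using \<open>Suc j < length vs\<close> assms(4) nth_eq_iff_index_eq[of vs "Suc j" 0] by simp
  qed
  then have "j = length vs - 1"
    using j by simp
  then show ?thesis
    using j assms(4) by (simp add: last_conv_nth)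
qed

lemma longest_dpath_succ_last:
  assumes "longest_dpath V E vs" "E \<subseteq> V \<times> V" "single_valued (E\<inverse>)" "vs \<noteq> []"
    and "(last vs, x) \<in> E"
  shows "x = hd vs"
proof -
  have "x = last (rev vs)"
    using assms by (intro longest_dpath_pred_hd[of V "E\<inverse>" "rev vs"])
      (auto simp: longest_dpath_rev hd_rev)
  then show ?thesis
    by (simp add: last_rev)
qed

lemma longest_dpath_out_edge:
  assumes "longest_dpath V E vs" "E \<subseteq> V \<times> V" "single_valued E" "single_valued (E\<inverse>)"
    and "vs \<noteq> []" "(x, y) \<in> E" "x \<in> set vs"
  shows "(x, y) \<in> insert (last vs, hd vs) (set (zip vs (tl vs)))"
proof -
  obtain i where i: "i < length vs" "x = vs ! i"
    using assms(7) by (auto simp: in_set_conv_nth)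
  show ?thesis
  proof (cases "Suc i < length vs")
    case True
    then have "(x, vs ! Suc i) \<in> E"
      using assms(1) i by (auto simp: longest_dpath_def intro: dpath_step)
    then have "y = vs ! Suc i"
      using assms(3,6) by (blast dest: single_valuedD)
    then show ?thesis
      using True i by (auto simp: in_set_zip_tl)
  next
    case False
    then have "i = length vs - 1"
      using i by simp
    then have "x = last vs"
      using i assms(5) by (simp add: last_conv_nth)
    then have "y = hd vs"
      using longest_dpath_succ_last[OF assms(1-2,4-5)] assms(6) by blast
    then show ?thesis
      using \<open>x = last vs\<close> by simp
  qed
qed

lemma longest_dpath_in_edge:
  assumes "longest_dpath V E vs" "E \<subseteq> V \<times> V" "single_valued E" "single_valued (E\<inverse>)"
    and "vs \<noteq> []" "(x, y) \<in> E" "y \<in> set vs"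
  shows "(x, y) \<in> insert (last vs, hd vs) (set (zip vs (tl vs)))"
proof -
  obtain i where i: "i < length vs" "y = vs ! i"
    using assms(7) by (auto simp: in_set_conv_nth)
  show ?thesis
  proof (cases i)
    case 0
    then have "y = hd vs"
      using i assms(5) by (simp add: hd_conv_nth)
    then have "x = last vs"
      using longest_dpath_pred_hd[OF assms(1-3,5)] assms(6) by blast
    then show ?thesis
      using \<open>y = hd vs\<close> by simp
  next
    case (Suc k)
    then have "(y, vs ! k) \<in> E\<inverse>" "(y, x) \<in> E\<inverse>"
      using assms(1,6) i by (auto simp: longest_dpath_def intro: dpath_step)
    then have "x = vs ! k"
      using assms(4) by (blast dest: single_valuedD)
    then show ?thesis
      using Suc i by (auto simp: in_set_zip_tl)
  qed
qed

lemma connected_closed_subset_eq: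
  assumes "dg_connected V E" "A \<subseteq> V" "a \<in> A" "(E \<union> E\<inverse>) `` A \<subseteq> A"
  shows "A = V"
proof -
  have "(E \<union> E\<inverse>)\<^sup>* `` A = A"
    using assms(4) by (rule Image_closed_trancl)
  then show ?thesis
    using assms(1-3) by (auto simp: dg_connected_def)
qed

lemma connected_single_valued_spanning_path:
  assumes "digraph V E" "dg_connected V E" "single_valued E" "single_valued (E\<inverse>)" "V \<noteq> {}"
  obtains vs where "distinct vs" "vs \<noteq> []" "set vs = V" "set (zip vs (tl vs)) \<subseteq> E"
    "E \<subseteq> insert (last vs, hd vs) (set (zip vs (tl vs)))"
proof -
  have EV: "E \<subseteq> V \<times> V"
    using assms(1) by (simp add: digraph_def)
  obtain vs where longest: "longest_dpath V E vs"
    using longest_dpath_exists assms(1) by (auto simp: digraph_def)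
  have vs: "vs \<noteq> []" "distinct vs" "set vs \<subseteq> V"
    using longest_dpath_nonempty[OF longest] assms(5) longest
    by (auto simp: longest_dpath_def dpath_def)
  let ?C = "insert (last vs, hd vs) (set (zip vs (tl vs)))"
  have edge: "(x, y) \<in> ?C" if "(x, y) \<in> E" "x \<in> set vs \<or> y \<in> set vs" for x y
    using longest_dpath_out_edge[OF longest EV assms(3,4) vs(1)]
      longest_dpath_in_edge[OF longest EV assms(3,4) vs(1)] that by blast
  have "?C \<subseteq> set vs \<times> set vs"
    using vs(1) by (auto dest: set_zip_leftD set_zip_rightD list.set_sel(2))
  have "(E \<union> E\<inverse>) `` set vs \<subseteq> set vs"
  proof
    fix y assume "y \<in> (E \<union> E\<inverse>) `` set vs"
    then obtain x where "x \<in> set vs" "(x, y) \<in> E \<or> (y, x) \<in> E"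
      by auto
    then have "(x, y) \<in> ?C \<or> (y, x) \<in> ?C"
      using edge by blast
    then show "y \<in> set vs"
      using \<open>?C \<subseteq> set vs \<times> set vs\<close> by blast
  qed
  then have "set vs = V"
    using connected_closed_subset_eq[OF assms(2) vs(3)] vs(1) by (meson last_in_set)
  moreover have "set (zip vs (tl vs)) \<subseteq> E"
    using longest by (simp add: longest_dpath_def dpath_zip_tl_subset)
  moreover have "E \<subseteq> ?C"
  proof
    fix e assume "e \<in> E"
    moreover obtain x y where "e = (x, y)"
      by fastforce
    ultimately show "e \<in> ?C"
      using edge EV \<open>set vs = V\<close> by blast
  qed
  ultimately show ?thesis
    using that vs by blast
qed

subsection \<open>Directed cycles\<close>

lemma card_cycle_edges:
  assumes "distinct vs" "vs \<noteq> []"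
  shows "card (insert (last vs, hd vs) (set (zip vs (tl vs)))) = length vs"
proof -
  have "(last vs, hd vs) \<notin> set (zip vs (tl vs))"
    using assms by (auto simp: in_set_zip_tl last_conv_nth nth_eq_iff_index_eq)
  moreover have "card (set (zip vs (tl vs))) = length vs - 1"
    using assms(1) by (simp add: distinct_card distinct_zipI1)
  ultimately show ?thesis
    using assms(2) by simp
qed

lemma dg_iso_sym:
  assumes "dg_iso V E W D"
  shows "dg_iso W D V E"
proof -
  obtain h where h: "bij_betw h V W" and edges: "\<forall>u\<in>V. \<forall>v\<in>V. (u, v) \<in> E \<longleftrightarrow> (h u, h v) \<in> D"
    using assms by (auto simp: dg_iso_def)
  let ?g = "the_inv_into V h"
  have g: "bij_betw ?g W V"
    using h by (rule bij_betw_the_inv_into)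
  have "(u, v) \<in> D \<longleftrightarrow> (?g u, ?g v) \<in> E" if "u \<in> W" "v \<in> W" for u v
    using edges bij_betwE[OF g] that f_the_inv_into_f_bij_betw[OF h] by metis
  with g show ?thesis
    by (auto simp: dg_iso_def)
qed

lemma polygon_dg_iso_cycle:
  assumes "distinct vs" "vs \<noteq> []"
  shows "dg_iso (polygon_V (length vs - 1)) (polygon_E (length vs - 1))
           (set vs) (insert (last vs, hd vs) (set (zip vs (tl vs))))"
proof -
  define m where "m = length vs - 1"
  have len: "length vs = Suc m"
    using assms(2) by (simp add: m_def)
  have idx: "vs ! i = vs ! j \<longleftrightarrow> i = j" if "i \<le> m" "j \<le> m" for i j
    using nth_eq_iff_index_eq[OF assms(1)] that len by simp
  have edge: "(i, j) \<in> polygon_E m \<longleftrightarrow>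
      (vs ! i, vs ! j) \<in> insert (last vs, hd vs) (set (zip vs (tl vs)))"
    if "i \<le> m" "j \<le> m" for i j
  proof -
    have "(vs ! i, vs ! j) = (last vs, hd vs) \<longleftrightarrow> i = m \<and> j = 0"
      using idx that assms(2) by (simp add: last_conv_nth hd_conv_nth len)
    moreover have "(vs ! i, vs ! j) \<in> set (zip vs (tl vs)) \<longleftrightarrow> i < m \<and> j = Suc i"
      using idx that by (auto simp: in_set_zip_tl len)
    ultimately show ?thesis
      by (auto simp: polygon_E_def)
  qed
  have "dg_iso (polygon_V m) (polygon_E m) (set vs)
      (insert (last vs, hd vs) (set (zip vs (tl vs))))"
    unfolding dg_iso_def polygon_V_def
  proof (intro exI[of _ "(!) vs"] conjI ballI)
    show "bij_betw ((!) vs) {0..m} (set vs)"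
      by (rule bij_betw_nth) (auto simp: assms(1) len)
  qed (simp add: edge)
  then show ?thesis
    by (simp add: m_def)
qed

lemma directed_cycle_if_not_multipath:
  assumes "digraph V E" "dg_connected V E" "single_valued E" "single_valued (E\<inverse>)"
    and "E \<noteq> {}" "\<not> multipath V E E"
  obtains vs where "distinct vs" "vs \<noteq> []" "set vs = V"
    "E = insert (last vs, hd vs) (set (zip vs (tl vs)))"
proof -
  have "V \<noteq> {}"
    using assms(1,5) by (auto simp: digraph_def)
  then obtain vs where vs: "distinct vs" "vs \<noteq> []" "set vs = V" "set (zip vs (tl vs)) \<subseteq> E"
    and E_sub: "E \<subseteq> insert (last vs, hd vs) (set (zip vs (tl vs)))"
    using connected_single_valued_spanning_path[OF assms(1-4)] by blast
  have "E = insert (last vs, hd vs) (set (zip vs (tl vs)))"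
  proof (rule ccontr)
    assume "\<not> ?thesis"
    then have E_path: "E = set (zip vs (tl vs))"
      using vs(4) E_sub by blast
    moreover obtain x y where "(x, y) \<in> E"
      using assms(5) by auto
    ultimately have "length vs \<ge> 2"
      by (auto simp: in_set_zip_tl)
    then show False
      using spanning_path_multipath[OF assms(1,2) vs(1) _ vs(3) E_path] assms(6) by blast
  qed
  with vs that show ?thesis
    by blast
qed

theorem proposition2p37:
  fixes V :: "'a set" and E :: "('a \<times> 'a) set" and n :: nat
  assumes "digraph V E" and "dg_connected V E"
    and "card E = n" and "n > 2"
    and "inclusion_iso (path_poset V E) (boolean_minus_top n)"
  shows "dg_iso V E (polygon_V (n - 1)) (polygon_E (n - 1))"
proof -
  have multipath_iff: "multipath V E F \<longleftrightarrow> F \<subset> E" for F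
    using multipath_iff_proper_subset[OF assms(1,3) _ assms(5)] assms(4) by simp
  have pairs: "multipath V E {e, e'}" if "e \<in> E" "e' \<in> E" for e e'
  proof -
    have "card {e, e'} < card E"
      using assms(3,4) by (simp add: card_insert_if)
    with that show ?thesis
      unfolding multipath_iff by auto
  qed
  have "\<not> multipath V E E" "E \<noteq> {}"
    using multipath_iff assms(3,4) by auto
  then obtain vs where vs: "distinct vs" "vs \<noteq> []" "set vs = V"
    and E_cycle: "E = insert (last vs, hd vs) (set (zip vs (tl vs)))"
    using directed_cycle_if_not_multipath[OF assms(1,2)] single_valued_if_pairs_multipath[OF assms(1) pairs]
    by blast
  then have "n = length vs"
    using card_cycle_edges[OF vs(1,2)] assms(3) by simp
  then show ?thesis
    using dg_iso_sym[OF polygon_dg_iso_cycle[OF vs(1,2)]] E_cycle vs(3) by simp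
qed

end
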